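(* Let $\tau>\tau_0>0$, $\gamma>0$, $f:[0,\infty)\to[0,\infty)$ continuous, and $\mathcal D,T$ as in the context. Then for every $u\in\mathcal D$, the function $t\mapsto(Tu)(t)$ is continuously differentiable on $[-\tau,0]$ (with one-sided derivatives at the endpoints).
   Context: For $u\in C([-\tau,0],[0,\infty))$ let $H_0(u)=u(0)-\int_{\tau_0}^{\tau}f(u(-a))e^{-\gamma(a-\tau_0)}da$, and $\mathcal D=\{u\in C([-\tau,0],[0,\infty)) : H_0(u)\ge0\}$. For $u\in\mathcal D$ define $Tu\in C([-\tau,0],[0,\infty))$ by $$(Tu)(t)=e^{-\gamma(t+\tau)}H_0(u)+\int_{\tau_0}^{\tau}f(u(t+\tau-a))e^{-\gamma(a-\tau_0)}da,\quad t\in[-\tau,\tau_0-\tau],$$ $$(Tu)(t)=e^{-\gamma(t+\tau)}H_0(u)+\int_{\tau_0}^{t+\tau}f((Tu)(t-a))e^{-\gamma(a-\tau_0)}da+\int_{t+\tau}^{\tau}f(u(t+\tau-a))e^{-\gamma(a-\tau_0)}da,\quad t\in(\tau_0-\tau,0]$$ (the second formula determines $Tu$ successively, since it only uses values of $Tu$ at points $t-a\le t-\tau_0$). *)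

theory Defs
  imports "HOL-Analysis.Analysis"
begin

text \<open>Functions in C([-tau,0],[0,infinity)) are modelled as real functions that are
  continuous and nonnegative on [-tau,0]; values outside [-tau,0] are irrelevant.\<close>

definition H0 :: "real \<Rightarrow> real \<Rightarrow> real \<Rightarrow> (real \<Rightarrow> real) \<Rightarrow> (real \<Rightarrow> real) \<Rightarrow> real" where
  "H0 \<tau> \<tau>0 \<gamma> f u = u 0 - integral {\<tau>0..\<tau>} (\<lambda>a. f (u (-a)) * exp (-\<gamma> * (a - \<tau>0)))"

definition inC :: "real \<Rightarrow> (real \<Rightarrow> real) \<Rightarrow> bool" where
  "inC \<tau> u \<longleftrightarrow> continuous_on {-\<tau>..0} u \<and> (\<forall>t\<in>{-\<tau>..0}. 0 \<le> u t)"

definition domD :: "real \<Rightarrow> real \<Rightarrow> real \<Rightarrow> (real \<Rightarrow> real) \<Rightarrow> (real \<Rightarrow> real) set" where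
  "domD \<tau> \<tau>0 \<gamma> f = {u. inC \<tau> u \<and> H0 \<tau> \<tau>0 \<gamma> f u \<ge> 0}"

definition T_eqs :: "real \<Rightarrow> real \<Rightarrow> real \<Rightarrow> (real \<Rightarrow> real) \<Rightarrow> (real \<Rightarrow> real) \<Rightarrow> (real \<Rightarrow> real) \<Rightarrow> bool" where
  "T_eqs \<tau> \<tau>0 \<gamma> f u v \<longleftrightarrow>
     (\<forall>t\<in>{-\<tau>..\<tau>0-\<tau>}. v t = exp (-\<gamma> * (t + \<tau>)) * H0 \<tau> \<tau>0 \<gamma> f u
        + integral {\<tau>0..\<tau>} (\<lambda>a. f (u (t + \<tau> - a)) * exp (-\<gamma> * (a - \<tau>0)))) \<and>
     (\<forall>t\<in>{\<tau>0-\<tau><..0}. v t = exp (-\<gamma> * (t + \<tau>)) * H0 \<tau> \<tau>0 \<gamma> f u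
        + integral {\<tau>0..t+\<tau>} (\<lambda>a. f (v (t - a)) * exp (-\<gamma> * (a - \<tau>0)))
        + integral {t+\<tau>..\<tau>} (\<lambda>a. f (u (t + \<tau> - a)) * exp (-\<gamma> * (a - \<tau>0))))"

definition Tmap :: "real \<Rightarrow> real \<Rightarrow> real \<Rightarrow> (real \<Rightarrow> real) \<Rightarrow> (real \<Rightarrow> real) \<Rightarrow> (real \<Rightarrow> real)" where
  "Tmap \<tau> \<tau>0 \<gamma> f u = (THE v. inC \<tau> v \<and> T_eqs \<tau> \<tau>0 \<gamma> f u v \<and> (\<forall>t. t \<notin> {-\<tau>..0} \<longrightarrow> v t = 0))"

end

theory Submission
  imports Defs
begin

(* Extend Tu backwards by the initial datum u: a "history" W is a continuous,
   nonnegative function on [-2tau,0] with W(s) = u(s+tau) for s <= -tau.  For such W put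
     rhs W t = exp(-gamma(t+tau)) H0(u) + integral_{tau0}^{tau} f(W(t-a)) exp(-gamma(a-tau0)) da.
   A history with W = rhs W on [-tau,0] restricts to the solution Tu of the defining equations,
   which is unique because these equations determine Tu interval by interval (steps of length
   tau0).  Such a fixed point exists by the method of steps: the operator "u(.+tau) on the past,
   rhs on [-tau,0]" only looks tau0 into the past, so its iterates stabilise on every bounded
   half-line.  Finally, substituting s = t-a turns rhs W into exp(-gamma t) times an integral of a
   continuous function between the variable limits t-tau and t-tau0, so rhs W, and hence Tu,
   is differentiable with the continuous derivative
     -gamma Tu(t) + f(W(t-tau0)) - f(W(t-tau)) exp(-gamma(tau-tau0)). *)

lemma integral_reflect_shift:
  fixes g :: "real \<Rightarrow> real"
  shows "integral {p..q} (\<lambda>a. g (t - a)) = integral {t-q..t-p} g"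
proof -
  have "integral {p..q} (\<lambda>a. g (t - a)) = integral {-q..-p} (\<lambda>y. g (y + t))"
    using Henstock_Kurzweil_Integration.integral_reflect_real[of "-p" "-q" "\<lambda>y. g (y + t)"] by (simp add: algebra_simps)
  also have "\<dots> = integral {t-q..t-p} g"
    using integral_shift_real_ivl[of "t-q" t "t-p" g] by simp
  finally show ?thesis .
qed

(* Proof: K t = exp(-gamma(t-p)) (G(t-p) - G(t-q))
   with G a primitive of h(s) exp(gamma s). *)
lemma delay_integral_has_derivative:
  fixes h :: "real \<Rightarrow> real" and \<gamma> p q A B t :: real
  assumes h: "continuous_on {A..B} h" and pq: "p \<le> q" and t: "t \<in> {A+q..B+p}"
  defines "K \<equiv> \<lambda>t. integral {p..q} (\<lambda>a. h (t - a) * exp (-\<gamma> * (a - p)))"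
  shows "(K has_real_derivative -\<gamma> * K t + h (t-p) - h (t-q) * exp (-\<gamma> * (q - p)))
           (at t within {A+q..B+p})"
proof -
  define I where "I = {A+q..B+p}"
  define g where "g s = h s * exp (\<gamma> * s)" for s
  define G where "G x = integral {A..x} g" for x
  define Q where "Q x = exp (-\<gamma> * (x - p)) * (G (x - p) - G (x - q))" for x
  have gc: "continuous_on {A..B} g" unfolding g_def using h by (auto intro!: continuous_intros)
  have K_eq_Q: "K x = Q x" if x: "x \<in> I" for x
  proof -
    have "g integrable_on {A..x-p}"
      by (rule integrable_continuous_interval, rule continuous_on_subset[OF gc]) (use x in \<open>auto simp: I_def\<close>)
    then have "G (x - q) + integral {x-q..x-p} g = G (x - p)"
      unfolding G_def by (intro Henstock_Kurzweil_Integration.integral_combine) (use x pq in \<open>auto simp: I_def\<close>)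
    moreover have "h (x - a) * exp (-\<gamma> * (a - p)) = exp (-\<gamma> * (x - p)) * g (x - a)" for a
      unfolding g_def by (simp add: exp_add[symmetric] algebra_simps)
    ultimately show ?thesis
      unfolding K_def Q_def by (simp add: integral_reflect_shift)
  qed
  have G_deriv: "((\<lambda>x. G (x - c)) has_real_derivative g (t - c)) (at t within I)"
    if c: "c \<in> {p..q}" for c
  proof -
    have "(G has_real_derivative g (t - c)) (at (t - c) within {A..B})"
      unfolding G_def by (rule integral_has_real_derivative[OF gc]) (use t c in auto)
    then have "(G has_real_derivative g (t - c)) (at (t - c) within (\<lambda>x. x - c) ` I)"
      by (rule DERIV_subset) (use c in \<open>auto simp: I_def\<close>)
    moreover have "((\<lambda>x. x - c) has_real_derivative 1) (at t within I)"
      by (auto intro!: derivative_eq_intros)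
    ultimately show ?thesis
      using DERIV_image_chain by (fastforce simp: o_def)
  qed
  from pq have "(Q has_real_derivative
      exp (-\<gamma> * (t - p)) * (-\<gamma>) * (G (t - p) - G (t - q))
      + exp (-\<gamma> * (t - p)) * (g (t - p) - g (t - q))) (at t within I)"
    unfolding Q_def by (auto intro!: derivative_eq_intros G_deriv)
  moreover have "exp (-\<gamma> * (t - p)) * (-\<gamma>) * (G (t - p) - G (t - q))
      + exp (-\<gamma> * (t - p)) * (g (t - p) - g (t - q))
      = -\<gamma> * K t + h (t-p) - h (t-q) * exp (-\<gamma> * (q - p))"
  proof -
    have g_scaled: "exp (-\<gamma> * (t - p)) * g (t - p) = h (t - p)"
      "exp (-\<gamma> * (t - p)) * g (t - q) = h (t - q) * exp (-\<gamma> * (q - p))"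
      unfolding g_def by (simp_all add: exp_add[symmetric] algebra_simps)
    have Kt: "K t = exp (-\<gamma> * (t - p)) * (G (t - p) - G (t - q))"
      using K_eq_Q t unfolding Q_def I_def by blast
    show ?thesis unfolding Kt using g_scaled by (simp add: algebra_simps)
  qed
  ultimately have "(Q has_real_derivative -\<gamma> * K t + h (t-p) - h (t-q) * exp (-\<gamma> * (q - p)))
      (at t within I)" by simp
  then show ?thesis unfolding I_def
    by (rule has_field_derivative_transform_within[where d=1]) (use t K_eq_Q in \<open>auto simp: I_def\<close>)
qed

definition causal_with_delay :: "real \<Rightarrow> ((real \<Rightarrow> 'b) \<Rightarrow> real \<Rightarrow> 'b) \<Rightarrow> bool" where
  "causal_with_delay \<delta> \<Phi> \<longleftrightarrow>
     (\<forall>A B c s. (\<forall>x\<le>c. A x = B x) \<longrightarrow> s \<le> c + \<delta> \<longrightarrow> \<Phi> A s = \<Phi> B s)"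

lemma causal_iterates_agree:
  assumes causal: "causal_with_delay \<delta> \<Phi>" and start: "\<forall>x\<le>c0. \<Phi> W0 x = W0 x"
  shows "\<forall>x\<le>c0 + real n * \<delta>. \<Phi> ((\<Phi> ^^ n) W0) x = (\<Phi> ^^ n) W0 x"
proof (induction n)
  case 0
  then show ?case using start by simp
next
  case (Suc n)
  have "\<Phi> (\<Phi> ((\<Phi> ^^ n) W0)) x = \<Phi> ((\<Phi> ^^ n) W0) x" if "x \<le> c0 + real (Suc n) * \<delta>" for x
    using causal Suc.IH that unfolding causal_with_delay_def by (simp add: algebra_simps)
  then show ?case by simp
qed

lemma causal_fixpoint_exists:
  assumes causal: "causal_with_delay \<delta> \<Phi>" and "0 < \<delta>"
    and start: "\<forall>x\<le>c0. \<Phi> W0 x = W0 x"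
    and inv: "P W0" "\<And>W. P W \<Longrightarrow> P (\<Phi> W)"
  shows "\<exists>W. P W \<and> (\<forall>x\<le>b. \<Phi> W x = W x)"
proof -
  obtain n :: nat where "b - c0 < real n * \<delta>" using reals_Archimedean3[OF \<open>0 < \<delta>\<close>] by blast
  then have n: "b \<le> c0 + real n * \<delta>" by simp
  have "P ((\<Phi> ^^ n) W0)" by (induction n) (simp_all add: inv)
  moreover have "\<forall>x\<le>b. \<Phi> ((\<Phi> ^^ n) W0) x = (\<Phi> ^^ n) W0 x"
    using causal_iterates_agree[OF causal start, of n] n by auto
  ultimately show ?thesis by blast
qed

lemma step_induct_real:
  fixes \<delta> a :: real
  assumes "0 < \<delta>" and base: "\<forall>x\<le>a. P x" and step: "\<And>c. \<forall>x\<le>c. P x \<Longrightarrow> \<forall>x\<le>c + \<delta>. P x"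
  shows "P x"
proof -
  have all_n: "\<forall>x\<le>a + real n * \<delta>. P x" for n
    by (induction n) (use base step in \<open>simp_all add: algebra_simps\<close>)
  obtain n :: nat where "x - a < real n * \<delta>" using reals_Archimedean3[OF \<open>0 < \<delta>\<close>] by blast
  then show ?thesis using all_n[of n] by simp
qed

definition delay_rhs :: "real \<Rightarrow> real \<Rightarrow> real \<Rightarrow> (real \<Rightarrow> real) \<Rightarrow> (real \<Rightarrow> real) \<Rightarrow> (real \<Rightarrow> real) \<Rightarrow> real \<Rightarrow> real" where
  "delay_rhs \<tau> \<tau>0 \<gamma> f u W t = exp (-\<gamma> * (t + \<tau>)) * H0 \<tau> \<tau>0 \<gamma> f u
     + integral {\<tau>0..\<tau>} (\<lambda>a. f (W (t - a)) * exp (-\<gamma> * (a - \<tau>0)))"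

definition step_map :: "real \<Rightarrow> real \<Rightarrow> real \<Rightarrow> (real \<Rightarrow> real) \<Rightarrow> (real \<Rightarrow> real) \<Rightarrow> (real \<Rightarrow> real) \<Rightarrow> real \<Rightarrow> real" where
  "step_map \<tau> \<tau>0 \<gamma> f u W t = (if t \<le> -\<tau> then u (t + \<tau>) else delay_rhs \<tau> \<tau>0 \<gamma> f u W t)"

definition is_history :: "real \<Rightarrow> (real \<Rightarrow> real) \<Rightarrow> (real \<Rightarrow> real) \<Rightarrow> bool" where
  "is_history \<tau> u W \<longleftrightarrow> continuous_on {-2*\<tau>..0} W \<and> (\<forall>s\<in>{-2*\<tau>..0}. 0 \<le> W s)
     \<and> (\<forall>s\<le>-\<tau>. W s = u (s + \<tau>))"

(* The defining equations of Tu have at most one solution on [-tau,0]: on [-tau,tau0-tau] they are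
   explicit, and beyond that the value at t only uses values at times <= t - tau0. *)
lemma T_eqs_unique:
  assumes pos: "0 < \<tau>0" and v1: "T_eqs \<tau> \<tau>0 \<gamma> f u v1" and v2: "T_eqs \<tau> \<tau>0 \<gamma> f u v2"
    and t: "t \<in> {-\<tau>..0}"
  shows "v1 t = v2 t"
proof -
  define P where "P x \<longleftrightarrow> (x \<in> {-\<tau>..0} \<longrightarrow> v1 x = v2 x)" for x
  have first_interval: "v1 t = v2 t" if "t \<in> {-\<tau>..\<tau>0-\<tau>}" for t
    using v1 v2 that unfolding T_eqs_def by auto
  have "P t"
  proof (rule step_induct_real[where a = "\<tau>0 - \<tau>", OF pos])
    show "\<forall>x\<le>\<tau>0 - \<tau>. P x" using first_interval by (auto simp: P_def)
  next
    fix c assume IH: "\<forall>x\<le>c. P x"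
    show "\<forall>x\<le>c + \<tau>0. P x"
    unfolding P_def proof (intro allI impI)
      fix x assume x: "x \<le> c + \<tau>0" "x \<in> {-\<tau>..0}"
      show "v1 x = v2 x"
      proof (cases "x \<le> \<tau>0 - \<tau>")
        case True then show ?thesis using first_interval x by auto
      next
        case False
        have "integral {\<tau>0..x+\<tau>} (\<lambda>a. f (v1 (x - a)) * exp (-\<gamma> * (a - \<tau>0)))
            = integral {\<tau>0..x+\<tau>} (\<lambda>a. f (v2 (x - a)) * exp (-\<gamma> * (a - \<tau>0)))"
          by (rule integral_cong) (use IH x pos in \<open>auto simp: P_def\<close>)
        then show ?thesis using v1 v2 False x unfolding T_eqs_def by auto
      qed
    qed
  qed
  then show ?thesis using t by (simp add: P_def)
qed

(* From here on: the standing hypotheses of the theorem. *)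
context
  fixes \<tau> \<tau>0 \<gamma> :: real and f u :: "real \<Rightarrow> real"
  assumes delays: "0 < \<tau>0" "\<tau>0 < \<tau>"
    and f_cont: "continuous_on {0..} f" and f_nonneg: "\<forall>x\<ge>0. 0 \<le> f x"
    and u_C: "inC \<tau> u" and H0_nonneg: "0 \<le> H0 \<tau> \<tau>0 \<gamma> f u"
begin

abbreviation "rhs \<equiv> delay_rhs \<tau> \<tau>0 \<gamma> f u"
abbreviation "step \<equiv> step_map \<tau> \<tau>0 \<gamma> f u"

lemma f_history_cont:
  assumes "is_history \<tau> u W"
  shows "continuous_on {-2*\<tau>..0} (\<lambda>s. f (W s))"
  using assms by (intro continuous_on_compose2[OF f_cont]) (auto simp: is_history_def)

lemma delay_rhs_has_derivative:
  assumes W: "is_history \<tau> u W" and t: "t \<in> {-\<tau>..0}"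
  shows "(rhs W has_real_derivative
           -\<gamma> * rhs W t + f (W (t - \<tau>0)) - f (W (t - \<tau>)) * exp (-\<gamma> * (\<tau> - \<tau>0)))
         (at t within {-\<tau>..0})"
proof -
  define K where "K t = integral {\<tau>0..\<tau>} (\<lambda>a. f (W (t - a)) * exp (-\<gamma> * (a - \<tau>0)))" for t
  have "(K has_real_derivative -\<gamma> * K t + f (W (t - \<tau>0)) - f (W (t - \<tau>)) * exp (-\<gamma> * (\<tau> - \<tau>0)))
      (at t within {-2*\<tau>+\<tau>..0+\<tau>0})"
    unfolding K_def
    by (rule delay_integral_has_derivative[OF f_history_cont[OF W]]) (use delays t in auto)
  then have "(K has_real_derivative -\<gamma> * K t + f (W (t - \<tau>0)) - f (W (t - \<tau>)) * exp (-\<gamma> * (\<tau> - \<tau>0)))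
      (at t within {-\<tau>..0})"
    by (rule DERIV_subset) (use delays in auto)
  then have "((\<lambda>t. exp (-\<gamma> * (t + \<tau>)) * H0 \<tau> \<tau>0 \<gamma> f u + K t) has_real_derivative
      exp (-\<gamma> * (t + \<tau>)) * (-\<gamma>) * H0 \<tau> \<tau>0 \<gamma> f u
      + (-\<gamma> * K t + f (W (t - \<tau>0)) - f (W (t - \<tau>)) * exp (-\<gamma> * (\<tau> - \<tau>0))))
      (at t within {-\<tau>..0})"
    by (auto intro!: derivative_eq_intros)
  then show ?thesis
    unfolding delay_rhs_def K_def[symmetric] by (simp add: algebra_simps)
qed

lemma delay_rhs_cont:
  assumes "is_history \<tau> u W"
  shows "continuous_on {-\<tau>..0} (rhs W)"
  using delay_rhs_has_derivative[OF assms] by (rule DERIV_continuous_on)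

lemma delay_rhs_nonneg:
  assumes W: "is_history \<tau> u W" and t: "t \<in> {-\<tau>..0}"
  shows "0 \<le> rhs W t"
proof -
  have "0 \<le> integral {\<tau>0..\<tau>} (\<lambda>a. f (W (t - a)) * exp (-\<gamma> * (a - \<tau>0)))"
  proof (rule Henstock_Kurzweil_Integration.integral_nonneg)
    show "(\<lambda>a. f (W (t - a)) * exp (-\<gamma> * (a - \<tau>0))) integrable_on {\<tau>0..\<tau>}"
      by (intro integrable_continuous_interval continuous_intros
               continuous_on_compose2[OF f_history_cont[OF W]]) (use t delays in auto)
    show "0 \<le> f (W (t - a)) * exp (-\<gamma> * (a - \<tau>0))" if "a \<in> {\<tau>0..\<tau>}" for a
      using W f_nonneg that t delays by (auto simp: is_history_def)
  qed
  then show ?thesis unfolding delay_rhs_def using H0_nonneg by simp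
qed

(* On [-tau,0] the step map is rhs; at t = -tau both branches agree by the definition of H0. *)
lemma step_map_eq_rhs:
  assumes W: "is_history \<tau> u W" and t: "t \<in> {-\<tau>..0}"
  shows "step W t = rhs W t"
proof (cases "t = -\<tau>")
  case True
  have "integral {\<tau>0..\<tau>} (\<lambda>a. f (W (-\<tau> - a)) * exp (-\<gamma> * (a - \<tau>0)))
      = integral {\<tau>0..\<tau>} (\<lambda>a. f (u (- a)) * exp (-\<gamma> * (a - \<tau>0)))"
    by (rule integral_cong) (use W delays in \<open>auto simp: is_history_def\<close>)
  then show ?thesis unfolding step_map_def delay_rhs_def True H0_def by simp
qed (use t in \<open>simp add: step_map_def\<close>)

(* The step map preserves admissible histories (continuity across -tau uses step_map_eq_rhs). *)
lemma step_map_history: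
  assumes W: "is_history \<tau> u W"
  shows "is_history \<tau> u (step W)"
proof -
  have u_cont: "continuous_on {-\<tau>..0} u" and u_nonneg: "\<forall>t\<in>{-\<tau>..0}. 0 \<le> u t"
    using u_C by (auto simp: inC_def)
  have "continuous_on {-2*\<tau>..-\<tau>} (\<lambda>t. u (t + \<tau>))"
    by (rule continuous_on_compose2[OF u_cont]) (auto intro!: continuous_intros)
  then have past: "continuous_on {-2*\<tau>..-\<tau>} (step W)"
    by (rule continuous_on_eq) (auto simp: step_map_def)
  have present: "continuous_on {-\<tau>..0} (step W)"
    by (rule continuous_on_eq[OF delay_rhs_cont[OF W]]) (use step_map_eq_rhs[OF W] in auto)
  have "{-2*\<tau>..0} = {-2*\<tau>..-\<tau>} \<union> {-\<tau>..0}" using delays by auto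
  then have "continuous_on {-2*\<tau>..0} (step W)"
    using continuous_on_closed_Un[OF _ _ past present] by simp
  moreover have "0 \<le> step W s" if "s \<in> {-2*\<tau>..0}" for s
    using u_nonneg delay_rhs_nonneg[OF W, of s] that by (auto simp: step_map_def)
  moreover have "\<forall>s\<le>-\<tau>. step W s = u (s + \<tau>)" by (simp add: step_map_def)
  ultimately show ?thesis unfolding is_history_def by blast
qed

(* rhs at time s only uses the history on [s-tau, s-tau0]. *)
lemma step_map_causal: "causal_with_delay \<tau>0 step"
  unfolding causal_with_delay_def
proof (intro allI impI)
  fix A B :: "real \<Rightarrow> real" and c s :: real
  assume AB: "\<forall>x\<le>c. A x = B x" and s: "s \<le> c + \<tau>0"
  have "integral {\<tau>0..\<tau>} (\<lambda>a. f (A (s - a)) * exp (-\<gamma> * (a - \<tau>0)))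
      = integral {\<tau>0..\<tau>} (\<lambda>a. f (B (s - a)) * exp (-\<gamma> * (a - \<tau>0)))"
    by (rule integral_cong) (use AB s in auto)
  then show "step A s = step B s" by (simp add: step_map_def delay_rhs_def)
qed

lemma history_fixpoint_exists: "\<exists>W. is_history \<tau> u W \<and> (\<forall>t\<in>{-\<tau>..0}. W t = rhs W t)"
proof -
  have u_cont: "continuous_on {-\<tau>..0} u" and u_nonneg: "\<forall>t\<in>{-\<tau>..0}. 0 \<le> u t"
    using u_C by (auto simp: inC_def)
  define W0 where "W0 s = u (min (s + \<tau>) 0)" for s
  have "continuous_on {-2*\<tau>..0} W0"
    unfolding W0_def
    by (rule continuous_on_compose2[OF u_cont]) (auto intro!: continuous_intros)
  moreover have "\<forall>s\<in>{-2*\<tau>..0}. 0 \<le> W0 s" using u_nonneg by (auto simp: W0_def)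
  moreover have "\<forall>s\<le>-\<tau>. W0 s = u (s + \<tau>)" by (simp add: W0_def)
  ultimately have W0: "is_history \<tau> u W0" unfolding is_history_def by blast
  have "\<forall>x\<le>-\<tau>. step W0 x = W0 x" by (simp add: step_map_def W0_def)
  from causal_fixpoint_exists[OF step_map_causal delays(1) this, of "is_history \<tau> u" 0]
  obtain W where W: "is_history \<tau> u W" and fixpoint: "\<forall>x\<le>0. step W x = W x"
    using W0 step_map_history by blast
  have "W t = rhs W t" if "t \<in> {-\<tau>..0}" for t
    using fixpoint step_map_eq_rhs[OF W that] that by simp
  then show ?thesis using W by blast
qed

(* A fixed-point history restricted to [-tau,0] satisfies the defining equations of Tu:
   split the delay integral at a = t+tau, where the history switches from Tu to u. *)
lemma history_fixpoint_solves_T_eqs: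
  assumes W: "is_history \<tau> u W" and fixpoint: "\<forall>t\<in>{-\<tau>..0}. W t = rhs W t"
  defines "v \<equiv> \<lambda>t. if t \<in> {-\<tau>..0} then W t else 0"
  shows "T_eqs \<tau> \<tau>0 \<gamma> f u v"
proof -
  have past: "W (t - a) = u (t + \<tau> - a)" if "t - a \<le> -\<tau>" for t a
    using W that by (auto simp: is_history_def algebra_simps)
  have kernel_integrable: "(\<lambda>a. f (W (t - a)) * exp (-\<gamma> * (a - \<tau>0))) integrable_on {\<tau>0..\<tau>}"
    if "t \<in> {-\<tau>..0}" for t
    by (intro integrable_continuous_interval continuous_intros
          continuous_on_compose2[OF f_history_cont[OF W]]) (use that delays in auto)
  have early: "v t = exp (-\<gamma> * (t + \<tau>)) * H0 \<tau> \<tau>0 \<gamma> f u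
        + integral {\<tau>0..\<tau>} (\<lambda>a. f (u (t + \<tau> - a)) * exp (-\<gamma> * (a - \<tau>0)))"
    if t: "t \<in> {-\<tau>..\<tau>0-\<tau>}" for t
  proof -
    have "integral {\<tau>0..\<tau>} (\<lambda>a. f (W (t - a)) * exp (-\<gamma> * (a - \<tau>0)))
       = integral {\<tau>0..\<tau>} (\<lambda>a. f (u (t + \<tau> - a)) * exp (-\<gamma> * (a - \<tau>0)))"
      by (rule integral_cong) (use t past in auto)
    then show ?thesis using fixpoint t delays by (simp add: v_def delay_rhs_def)
  qed
  have late: "v t = exp (-\<gamma> * (t + \<tau>)) * H0 \<tau> \<tau>0 \<gamma> f u
        + integral {\<tau>0..t+\<tau>} (\<lambda>a. f (v (t - a)) * exp (-\<gamma> * (a - \<tau>0)))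
        + integral {t+\<tau>..\<tau>} (\<lambda>a. f (u (t + \<tau> - a)) * exp (-\<gamma> * (a - \<tau>0)))"
    if t: "t \<in> {\<tau>0-\<tau><..0}" for t
  proof -
    have t': "t \<in> {-\<tau>..0}" using t delays by auto
    have "integral {\<tau>0..t+\<tau>} (\<lambda>a. f (W (t - a)) * exp (-\<gamma> * (a - \<tau>0)))
       + integral {t+\<tau>..\<tau>} (\<lambda>a. f (W (t - a)) * exp (-\<gamma> * (a - \<tau>0)))
       = integral {\<tau>0..\<tau>} (\<lambda>a. f (W (t - a)) * exp (-\<gamma> * (a - \<tau>0)))"
      by (rule Henstock_Kurzweil_Integration.integral_combine[OF _ _ kernel_integrable[OF t']])
         (use t in auto)
    moreover have "integral {\<tau>0..t+\<tau>} (\<lambda>a. f (W (t - a)) * exp (-\<gamma> * (a - \<tau>0)))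
       = integral {\<tau>0..t+\<tau>} (\<lambda>a. f (v (t - a)) * exp (-\<gamma> * (a - \<tau>0)))"
      by (rule integral_cong) (use t delays in \<open>auto simp: v_def\<close>)
    moreover have "integral {t+\<tau>..\<tau>} (\<lambda>a. f (W (t - a)) * exp (-\<gamma> * (a - \<tau>0)))
       = integral {t+\<tau>..\<tau>} (\<lambda>a. f (u (t + \<tau> - a)) * exp (-\<gamma> * (a - \<tau>0)))"
      by (rule integral_cong) (use past in auto)
    ultimately show ?thesis using fixpoint t' by (simp add: v_def delay_rhs_def)
  qed
  show ?thesis unfolding T_eqs_def using early late by blast
qed

lemma Tmap_eq_history:
  assumes W: "is_history \<tau> u W" and fixpoint: "\<forall>t\<in>{-\<tau>..0}. W t = rhs W t"
  shows "Tmap \<tau> \<tau>0 \<gamma> f u = (\<lambda>t. if t \<in> {-\<tau>..0} then W t else 0)" (is "_ = ?v")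
  unfolding Tmap_def
proof (rule the_equality)
  have "continuous_on {-\<tau>..0} ?v"
    by (rule continuous_on_eq[of _ W]) (use W delays in \<open>auto simp: is_history_def
          intro: continuous_on_subset\<close>)
  then have "inC \<tau> ?v" using W delays by (auto simp: inC_def is_history_def)
  then show "inC \<tau> ?v \<and> T_eqs \<tau> \<tau>0 \<gamma> f u ?v \<and> (\<forall>t. t \<notin> {-\<tau>..0} \<longrightarrow> ?v t = 0)"
    using history_fixpoint_solves_T_eqs[OF W fixpoint] by simp
next
  fix w assume w: "inC \<tau> w \<and> T_eqs \<tau> \<tau>0 \<gamma> f u w \<and> (\<forall>t. t \<notin> {-\<tau>..0} \<longrightarrow> w t = 0)"
  show "w = ?v"
  proof
    fix t show "w t = ?v t"
      using w T_eqs_unique[OF delays(1) _ history_fixpoint_solves_T_eqs[OF W fixpoint], of w t]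
      by (cases "t \<in> {-\<tau>..0}") auto
  qed
qed

end

theorem lemma4:
  fixes \<tau> \<tau>0 \<gamma> :: real and f :: "real \<Rightarrow> real" and u :: "real \<Rightarrow> real"
  assumes "0 < \<tau>0" and "\<tau>0 < \<tau>" and "0 < \<gamma>"
    and "continuous_on {0..} f" and "\<forall>x\<ge>0. 0 \<le> f x"
    and "u \<in> domD \<tau> \<tau>0 \<gamma> f"
  shows "\<exists>v'. continuous_on {-\<tau>..0} v' \<and>
           (\<forall>t\<in>{-\<tau>..0}. (Tmap \<tau> \<tau>0 \<gamma> f u has_real_derivative v' t) (at t within {-\<tau>..0}))"
proof -
  have "inC \<tau> u" and "0 \<le> H0 \<tau> \<tau>0 \<gamma> f u" using assms(6) by (auto simp: domD_def)
  note setting = assms(1,2,4,5) this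
  obtain W where W: "is_history \<tau> u W"
    and fixpoint: "\<forall>t\<in>{-\<tau>..0}. W t = delay_rhs \<tau> \<tau>0 \<gamma> f u W t"
    using history_fixpoint_exists[OF setting] by blast
  define v' where "v' t = -\<gamma> * delay_rhs \<tau> \<tau>0 \<gamma> f u W t + f (W (t - \<tau>0))
                          - f (W (t - \<tau>)) * exp (-\<gamma> * (\<tau> - \<tau>0))" for t
  have "continuous_on {-\<tau>..0} v'"
    unfolding v'_def using assms(1,2)
    by (intro continuous_intros delay_rhs_cont[OF setting W]
          continuous_on_compose2[OF f_history_cont[OF setting W]]) auto
  moreover have "(Tmap \<tau> \<tau>0 \<gamma> f u has_real_derivative v' t) (at t within {-\<tau>..0})"
    if t: "t \<in> {-\<tau>..0}" for t
    unfolding Tmap_eq_history[OF setting W fixpoint] v'_def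
    by (rule has_field_derivative_transform_within[OF delay_rhs_has_derivative[OF setting W t], where d=1])
       (use t fixpoint in auto)
  ultimately show ?thesis by blast
qed

end
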